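(* Let $f_{\bm{\theta}}:\mathbb{R}^d\to\mathbb{R}$ be a neural network with parameters $\bm{\theta}\in\mathbb{R}^n$, let $\bm{\theta}_0$ be fixed, and let $\bm{\Theta}(\bm{x},\bm{x}')=\langle\nabla_{\bm{\theta}}f_{\bm{\theta}_0}(\bm{x}),\nabla_{\bm{\theta}}f_{\bm{\theta}_0}(\bm{x}')\rangle$ be its empirical neural tangent kernel at $\bm{\theta}_0$. Let $\bm{u}\in\mathbb{S}^{d-1}$ be a unit vector parameterizing the linear predictor $g_{\bm{u}}(\bm{x})=\bm{u}^\top\bm{x}$, and let $\bm{x}\sim\mathcal{N}(\bm{0},\bm{I})$. Then the alignment of $g_{\bm{u}}$ with $\bm{\Theta}$, defined as $\alpha(g_{\bm{u}})=\mathbb{E}_{\bm{x},\bm{x}'}\left[g_{\bm{u}}(\bm{x})\bm{\Theta}(\bm{x},\bm{x}')g_{\bm{u}}(\bm{x}')\right]$ with $\bm{x},\bm{x}'$ independent $\mathcal{N}(\bm{0},\bm{I})$, is given by $$\alpha(g_{\bm{u}})=\left\|\mathbb{E}_{\bm{x}}\left[\nabla^2_{\bm{x},\bm{\theta}}f_{\bm{\theta}_0}(\bm{x})\right]\bm{u}\right\|_2^2,$$ where $\nabla^2_{\bm{x},\bm{\theta}}f_{\bm{\theta}_0}(\bm{x})\in\mathbb{R}^{n\times d}$ denotes the matrix of mixed second derivatives of $f_{\bm{\theta}}(\bm{x})$ with respect to the weights $\bm{\theta}$ and the input $\bm{x}$, evaluated at $\bm{\theta}_0$.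
   Context: $\nabla_{\bm{\theta}}f_{\bm{\theta}_0}(\bm{x})\in\mathbb{R}^n$ is the gradient of the network output with respect to its parameters at $\bm{\theta}_0$; the network is implicitly assumed regular enough that these derivatives and expectations exist. *)

theory Defs
  imports "HOL-Probability.Probability"
begin

definition std_gauss :: "(real ^ 'd::finite) measure" where
  "std_gauss = density lborel (\<lambda>x. \<Prod>j\<in>UNIV. ennreal (std_normal_density (x $ j)))"

text \<open>Empirical NTK at theta0, built from the parameter gradient G x.\<close>
definition ntk :: "(real ^ 'd::finite \<Rightarrow> real ^ 'n::finite) \<Rightarrow> real ^ 'd \<Rightarrow> real ^ 'd \<Rightarrow> real" where
  "ntk G x x' = G x \<bullet> G x'"

definition alignment :: "(real ^ 'd::finite \<Rightarrow> real ^ 'd \<Rightarrow> real) \<Rightarrow> (real ^ 'd \<Rightarrow> real) \<Rightarrow> real" where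
  "alignment K g = (\<integral>p. g (fst p) * K (fst p) (snd p) * g (snd p) \<partial>(std_gauss \<Otimes>\<^sub>M std_gauss))"

end

theory Submission
  imports Defs "HOL-Real_Asymp.Real_Asymp"
begin

text \<open>Since \<open>x\<close> and \<open>x'\<close> are independent, the alignment factorises as
  \<open>\<parallel>E[(u \<bullet> x) G x]\<parallel>\<^sup>2\<close>, and Gaussian integration by parts (Stein's lemma) gives
  \<open>E[(u \<bullet> x) G x] = E[\<partial>\<^sub>u G x] = E[H x] u\<close>.
  Stein's lemma in direction \<open>u\<close> reduces to the one-dimensional identity
  \<open>\<integral>(t - \<mu>) \<phi>\<^sub>\<mu> g = \<integral>\<phi>\<^sub>\<mu> g'\<close> by disintegrating Lebesgue measure along the lines \<open>y + \<real> u\<close>,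
  on each of which the Gaussian density is a multiple of a normal density in the line parameter.
  The one-dimensional identity is Fubini's theorem applied to \<open>(t - \<mu>) \<phi>\<^sub>\<mu> t = - \<phi>\<^sub>\<mu>' t\<close>,
  which needs no integrability of \<open>(t - \<mu>) \<phi>\<^sub>\<mu> g\<close> in advance.\<close>

section \<open>Stein's identity for normal distributions on the real line\<close>

lemma normal_density_unit_variance:
  "normal_density \<mu> 1 t = exp (- (t - \<mu>)\<^sup>2 / 2) / sqrt (2 * pi)"
  by (simp add: normal_density_def)

lemma DERIV_normal_density_unit_variance:
  "(normal_density \<mu> 1 has_real_derivative - (t - \<mu>) * normal_density \<mu> 1 t) (at t)"
proof -
  have "((\<lambda>t. exp (- (t - \<mu>)\<^sup>2 / 2) / sqrt (2 * pi)) has_real_derivative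
      exp (- (t - \<mu>)\<^sup>2 / 2) * (- (t - \<mu>)) / sqrt (2 * pi)) (at t)"
    by (intro DERIV_cdivide) (auto intro!: derivative_eq_intros simp: field_simps)
  then show ?thesis
    unfolding normal_density_unit_variance[abs_def] by (simp only: mult.commute times_divide_eq_right)
qed

lemma normal_density_unit_variance_tendsto_0: "(normal_density \<mu> 1 \<longlongrightarrow> 0) at_top"
  unfolding normal_density_unit_variance[abs_def] by real_asymp

lemma normal_density_uminus: "normal_density \<mu> \<sigma> (- x) = normal_density (- \<mu>) \<sigma> x"
  by (simp add: normal_density_def power2_eq_square algebra_simps)

lemma has_bochner_integral_normal_upper_tail:
  assumes "\<mu> \<le> t"
  shows "has_bochner_integral lborel
    (\<lambda>s. indicator {t..} s * ((s - \<mu>) * normal_density \<mu> 1 s)) (normal_density \<mu> 1 t)"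
proof (rule has_bochner_integral_nn_integral)
  have "(\<integral>\<^sup>+s. ennreal (indicator {t..} s * ((s - \<mu>) * normal_density \<mu> 1 s)) \<partial>lborel)
      = (\<integral>\<^sup>+s. ennreal ((s - \<mu>) * normal_density \<mu> 1 s) * indicator {t..} s \<partial>lborel)"
    by (intro nn_integral_cong) (simp add: indicator_def)
  also have "\<dots> = 0 - (- normal_density \<mu> 1 t)"
  proof (rule nn_integral_FTC_atLeast)
    show "((\<lambda>s. - normal_density \<mu> 1 s) has_real_derivative (s - \<mu>) * normal_density \<mu> 1 s) (at s)"
      for s using DERIV_minus[OF DERIV_normal_density_unit_variance] by (simp add: algebra_simps)
    show "((\<lambda>s. - normal_density \<mu> 1 s) \<longlongrightarrow> 0) at_top"
      using tendsto_minus[OF normal_density_unit_variance_tendsto_0] by simp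
  qed (use assms in auto)
  finally show "(\<integral>\<^sup>+s. ennreal (indicator {t..} s * ((s - \<mu>) * normal_density \<mu> 1 s)) \<partial>lborel)
      = ennreal (normal_density \<mu> 1 t)"
    by simp
qed (use assms in \<open>auto simp: indicator_def\<close>)

lemma lborel_integral_deriv_atLeastAtMost:
  fixes g g' :: "real \<Rightarrow> real"
  assumes "\<And>t. (g has_real_derivative g' t) (at t)" and "a \<le> b"
    and "integrable lborel (\<lambda>t. indicator {a..b} t * g' t)"
  shows "(\<integral>t. indicator {a..b} t * g' t \<partial>lborel) = g b - g a"
proof -
  have "(g' has_integral (g b - g a)) {a..b}"
    using assms(1,2) by (intro fundamental_theorem_of_calculus)
      (auto simp: has_real_derivative_iff_has_vector_derivative[symmetric] intro: DERIV_subset)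
  moreover have "set_integrable lborel {a..b} g'"
    using assms(3) by (simp add: set_integrable_def)
  ultimately have "(LINT t:{a..b}|lborel. g' t) = g b - g a"
    by (simp add: set_borel_integral_eq_integral(2) integral_unique)
  then show ?thesis
    by (simp add: set_lebesgue_integral_def)
qed

lemma lborel_integral_uminus:
  fixes f :: "real \<Rightarrow> real"
  shows "(\<integral>x. f (- x) \<partial>lborel) = integral\<^sup>L lborel f"
  using lborel_integral_real_affine[of "-1" f 0] by simp

lemma lborel_integrable_uminus_iff:
  fixes f :: "real \<Rightarrow> real"
  shows "integrable lborel (\<lambda>x. f (- x)) \<longleftrightarrow> integrable lborel f"
  using lborel_integrable_real_affine_iff[of "-1" f 0] by simp

text \<open>Integrating out \<open>s\<close> turns the kernel into \<open>\<phi>\<^sub>\<mu> h\<close> on \<open>[\<mu>, \<infinity>)\<close>, because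
  \<open>(s - \<mu>) \<phi>\<^sub>\<mu> s = - \<phi>\<^sub>\<mu>' s\<close>; integrating out \<open>t\<close> instead gives \<open>(s - \<mu>) \<phi>\<^sub>\<mu> s \<integral>\<^sub>\<mu>\<^sup>s h\<close>.\<close>
definition normal_stein_kernel :: "real \<Rightarrow> (real \<Rightarrow> real) \<Rightarrow> real \<Rightarrow> real \<Rightarrow> real" where
  "normal_stein_kernel \<mu> h t s =
    h t * (indicator {\<mu>..} t * indicator {t..} s * ((s - \<mu>) * normal_density \<mu> 1 s))"

lemma abs_normal_stein_kernel:
  "\<bar>normal_stein_kernel \<mu> h t s\<bar> = normal_stein_kernel \<mu> (\<lambda>t. \<bar>h t\<bar>) t s"
  by (simp add: normal_stein_kernel_def indicator_def abs_mult)

lemma borel_measurable_normal_stein_kernel [measurable]: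
  assumes [measurable]: "h \<in> borel_measurable borel"
  shows "case_prod (normal_stein_kernel \<mu> h) \<in> borel_measurable (lborel \<Otimes>\<^sub>M lborel)"
  unfolding normal_stein_kernel_def indicator_def atLeast_iff by measurable

lemma has_bochner_integral_normal_stein_kernel_in_s:
  "has_bochner_integral lborel (normal_stein_kernel \<mu> h t) (indicator {\<mu>..} t * (normal_density \<mu> 1 t * h t))"
proof (cases "\<mu> \<le> t")
  case True
  then show ?thesis
    using has_bochner_integral_mult_left[OF has_bochner_integral_normal_upper_tail[OF True], of "h t"]
    by (simp add: normal_stein_kernel_def[abs_def] mult_ac)
qed (simp add: normal_stein_kernel_def[abs_def] has_bochner_integral_zero)

lemma integrable_normal_stein_kernel:
  assumes [measurable]: "h \<in> borel_measurable borel"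
    and int: "integrable lborel (\<lambda>t. normal_density \<mu> 1 t * h t)"
  shows "integrable (lborel \<Otimes>\<^sub>M lborel) (case_prod (normal_stein_kernel \<mu> h))"
proof (rule lborel_pair.Fubini_integrable)
  have abs_int: "integrable lborel (\<lambda>t. normal_density \<mu> 1 t * \<bar>h t\<bar>)"
    using integrable_abs[OF int] by (simp add: abs_mult)
  have "integrable lborel (\<lambda>t. indicator {\<mu>..} t * (normal_density \<mu> 1 t * \<bar>h t\<bar>))"
    using integrable_mult_indicator[OF _ abs_int, of "{\<mu>..}"] by simp
  then show "integrable lborel (\<lambda>t. \<integral>s. norm (case_prod (normal_stein_kernel \<mu> h) (t, s)) \<partial>lborel)"
    using has_bochner_integral_normal_stein_kernel_in_s[of \<mu> "\<lambda>t. \<bar>h t\<bar>"]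
    by (simp add: abs_normal_stein_kernel has_bochner_integral_iff)
  show "AE t in lborel. integrable lborel (\<lambda>s. case_prod (normal_stein_kernel \<mu> h) (t, s))"
    using has_bochner_integral_normal_stein_kernel_in_s[of \<mu> h] by (simp add: has_bochner_integral_iff)
qed measurable

lemma integral_normal_stein_kernel_in_t:
  fixes g g' :: "real \<Rightarrow> real"
  assumes deriv: "\<And>t. (g has_real_derivative g' t) (at t)"
    and int: "integrable lborel (\<lambda>t. normal_stein_kernel \<mu> g' t s)"
  shows "(\<integral>t. normal_stein_kernel \<mu> g' t s \<partial>lborel)
    = indicator {\<mu>..} s * ((s - \<mu>) * normal_density \<mu> 1 s * (g s - g \<mu>))"
proof (cases "\<mu> < s")
  case True
  have kernel_eq: "normal_stein_kernel \<mu> g' t s = (s - \<mu>) * normal_density \<mu> 1 s * (indicator {\<mu>..s} t * g' t)" for t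
    by (simp add: normal_stein_kernel_def indicator_def)
  have "(s - \<mu>) * normal_density \<mu> 1 s \<noteq> 0"
    using True normal_density_pos[of 1 \<mu> s] by simp
  then have "integrable lborel (\<lambda>t. indicator {\<mu>..s} t * g' t)"
    using int unfolding kernel_eq by simp
  then have "(\<integral>t. indicator {\<mu>..s} t * g' t \<partial>lborel) = g s - g \<mu>"
    using True by (intro lborel_integral_deriv_atLeastAtMost[OF deriv]) simp_all
  with True show ?thesis
    by (simp add: kernel_eq)
next
  case False
  then have "normal_stein_kernel \<mu> g' t s = 0" for t
    by (simp add: normal_stein_kernel_def indicator_def)
  with False show ?thesis
    by (simp add: indicator_def)
qed

lemma normal_stein_identity_upper_half:
  fixes g g' :: "real \<Rightarrow> real"
  assumes deriv: "\<And>t. (g has_real_derivative g' t) (at t)"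
    and g'_measurable [measurable]: "g' \<in> borel_measurable borel"
    and int: "integrable lborel (\<lambda>t. normal_density \<mu> 1 t * g' t)"
  shows "integrable lborel (\<lambda>s. indicator {\<mu>..} s * ((s - \<mu>) * normal_density \<mu> 1 s * (g s - g \<mu>)))"
    and "(\<integral>t. indicator {\<mu>..} t * (normal_density \<mu> 1 t * g' t) \<partial>lborel)
       = (\<integral>s. indicator {\<mu>..} s * ((s - \<mu>) * normal_density \<mu> 1 s * (g s - g \<mu>)) \<partial>lborel)"
proof -
  define K where "K = normal_stein_kernel \<mu> g'"
  define R where "R = (\<lambda>s. indicator {\<mu>..} s * ((s - \<mu>) * normal_density \<mu> 1 s * (g s - g \<mu>)))"
  have "isCont g t" for t
    using deriv by (rule DERIV_isCont)
  then have [measurable]: "g \<in> borel_measurable borel"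
    by (intro borel_measurable_continuous_onI continuous_at_imp_continuous_on) simp
  have K_measurable [measurable]: "case_prod K \<in> borel_measurable (lborel \<Otimes>\<^sub>M lborel)"
    unfolding K_def by measurable
  have R_measurable: "R \<in> borel_measurable lborel"
    unfolding R_def by measurable
  have K_int: "integrable (lborel \<Otimes>\<^sub>M lborel) (case_prod K)"
    unfolding K_def by (rule integrable_normal_stein_kernel[OF g'_measurable int])
  have R_ae: "AE s in lborel. (\<integral>t. K t s \<partial>lborel) = R s"
    using lborel_pair.AE_integrable_snd[OF K_int]
    by eventually_elim (simp add: K_def R_def integral_normal_stein_kernel_in_t[OF deriv])
  have "integrable lborel R"
    by (rule integrable_cong_AE_imp[OF lborel_pair.integrable_snd[OF K_int] R_measurable R_ae])
  then show "integrable lborel (\<lambda>s. indicator {\<mu>..} s * ((s - \<mu>) * normal_density \<mu> 1 s * (g s - g \<mu>)))"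
    by (simp add: R_def)
  have "(\<integral>t. indicator {\<mu>..} t * (normal_density \<mu> 1 t * g' t) \<partial>lborel) = (\<integral>t. \<integral>s. K t s \<partial>lborel \<partial>lborel)"
    using has_bochner_integral_normal_stein_kernel_in_s[of \<mu> g'] by (simp add: K_def has_bochner_integral_iff)
  also have "\<dots> = (\<integral>s. \<integral>t. K t s \<partial>lborel \<partial>lborel)"
    by (rule lborel_pair.Fubini_integral[OF K_int, symmetric])
  also have "\<dots> = integral\<^sup>L lborel R"
    using R_ae by (intro integral_cong_AE R_measurable) measurable
  finally show "(\<integral>t. indicator {\<mu>..} t * (normal_density \<mu> 1 t * g' t) \<partial>lborel)
       = (\<integral>s. indicator {\<mu>..} s * ((s - \<mu>) * normal_density \<mu> 1 s * (g s - g \<mu>)) \<partial>lborel)"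
    by (simp add: R_def)
qed

lemma normal_stein_identity_lower_half:
  fixes g g' :: "real \<Rightarrow> real"
  assumes deriv: "\<And>t. (g has_real_derivative g' t) (at t)"
    and g'_measurable [measurable]: "g' \<in> borel_measurable borel"
    and int: "integrable lborel (\<lambda>t. normal_density \<mu> 1 t * g' t)"
  shows "integrable lborel (\<lambda>s. indicator {..\<mu>} s * ((s - \<mu>) * normal_density \<mu> 1 s * (g s - g \<mu>)))"
    and "(\<integral>t. indicator {..\<mu>} t * (normal_density \<mu> 1 t * g' t) \<partial>lborel)
       = (\<integral>s. indicator {..\<mu>} s * ((s - \<mu>) * normal_density \<mu> 1 s * (g s - g \<mu>)) \<partial>lborel)"
proof -
  have deriv_reflected: "((\<lambda>t. - g (- t)) has_real_derivative g' (- t)) (at t)" for t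
    using DERIV_minus[OF iffD1[OF DERIV_mirror deriv[of "- t"]]] by simp
  have "integrable lborel (\<lambda>t. normal_density \<mu> 1 (- t) * g' (- t))"
    using int lborel_integrable_uminus_iff[of "\<lambda>t. normal_density \<mu> 1 t * g' t"] by simp
  then have int_reflected: "integrable lborel (\<lambda>t. normal_density (- \<mu>) 1 t * g' (- t))"
    by (simp add: normal_density_uminus)
  have "(\<lambda>t. g' (- t)) \<in> borel_measurable borel"
    by measurable
  note upper = normal_stein_identity_upper_half[OF deriv_reflected this int_reflected]
  define L where "L = (\<lambda>s. indicator {..\<mu>} s * ((s - \<mu>) * normal_density \<mu> 1 s * (g s - g \<mu>)))"
  define M where "M = (\<lambda>t. indicator {..\<mu>} t * (normal_density \<mu> 1 t * g' t))"
  have L_reflected: "indicator {- \<mu>..} s * ((s - (- \<mu>)) * normal_density (- \<mu>) 1 s * (- g (- s) - (- g (- (- \<mu>)))))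
      = L (- s)" for s
    by (auto simp: L_def indicator_def normal_density_uminus algebra_simps)
  have M_reflected: "indicator {- \<mu>..} t * (normal_density (- \<mu>) 1 t * g' (- t)) = M (- t)" for t
    by (auto simp: M_def indicator_def normal_density_uminus)
  show "integrable lborel L"
    using upper(1) unfolding L_reflected lborel_integrable_uminus_iff by simp
  show "integral\<^sup>L lborel M = integral\<^sup>L lborel L"
    using upper(2) unfolding L_reflected M_reflected lborel_integral_uminus by simp
qed

lemma normal_stein_identity:
  fixes g g' :: "real \<Rightarrow> real"
  assumes deriv: "\<And>t. (g has_real_derivative g' t) (at t)"
    and g'_measurable [measurable]: "g' \<in> borel_measurable borel"
    and int: "integrable lborel (\<lambda>t. normal_density \<mu> 1 t * g' t)"
  shows "(\<integral>t. (t - \<mu>) * normal_density \<mu> 1 t * g t \<partial>lborel) = (\<integral>t. normal_density \<mu> 1 t * g' t \<partial>lborel)"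
proof -
  define \<phi> where "\<phi> = normal_density \<mu> 1"
  define U where "U = (\<lambda>s. indicator {\<mu>..} s * ((s - \<mu>) * \<phi> s * (g s - g \<mu>)))"
  define L where "L = (\<lambda>s. indicator {..\<mu>} s * ((s - \<mu>) * \<phi> s * (g s - g \<mu>)))"
  have int_U: "integrable lborel U"
    and U_integral: "(\<integral>t. indicator {\<mu>..} t * (\<phi> t * g' t) \<partial>lborel) = integral\<^sup>L lborel U"
    using normal_stein_identity_upper_half[OF deriv g'_measurable int] by (simp_all add: U_def \<phi>_def)
  have int_L: "integrable lborel L"
    and L_integral: "(\<integral>t. indicator {..\<mu>} t * (\<phi> t * g' t) \<partial>lborel) = integral\<^sup>L lborel L"
    using normal_stein_identity_lower_half[OF deriv g'_measurable int] by (simp_all add: L_def \<phi>_def)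
  have centered: "has_bochner_integral lborel (\<lambda>t. (t - \<mu>) * \<phi> t * g \<mu>) 0"
    using has_bochner_integral_mult_left[OF normal_moment_odd[where \<mu>=\<mu> and \<sigma>=1 and k=0], of "g \<mu>"]
    by (simp add: \<phi>_def mult_ac)
  have split: "(t - \<mu>) * \<phi> t * g t = U t + L t + (t - \<mu>) * \<phi> t * g \<mu>" for t
    by (auto simp: U_def L_def indicator_def algebra_simps)
  have int_upper: "integrable lborel (\<lambda>t. indicator {\<mu>..} t * (\<phi> t * g' t))"
    and int_lower: "integrable lborel (\<lambda>t. indicator {..\<mu>} t * (\<phi> t * g' t))"
    using integrable_mult_indicator[OF _ int] by (simp_all add: \<phi>_def)
  have halves: "AE t in lborel. indicator {\<mu>..} t * (\<phi> t * g' t) + indicator {..\<mu>} t * (\<phi> t * g' t)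
      = \<phi> t * g' t"
    using AE_lborel_singleton[of \<mu>] by eventually_elim (auto simp: indicator_def)
  have "(\<integral>t. (t - \<mu>) * \<phi> t * g t \<partial>lborel) = (\<integral>t. U t + L t + (t - \<mu>) * \<phi> t * g \<mu> \<partial>lborel)"
    by (simp add: split)
  also have "\<dots> = integral\<^sup>L lborel U + integral\<^sup>L lborel L"
    using int_U int_L centered by (simp add: has_bochner_integral_iff)
  also have "\<dots> = (\<integral>t. indicator {\<mu>..} t * (\<phi> t * g' t) + indicator {..\<mu>} t * (\<phi> t * g' t) \<partial>lborel)"
    using int_upper int_lower by (simp add: U_integral L_integral)
  also have "\<dots> = (\<integral>t. \<phi> t * g' t \<partial>lborel)"
    using halves by (intro integral_cong_AE) (simp_all add: \<phi>_def)
  finally show ?thesis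
    by (simp add: \<phi>_def)
qed

section \<open>Gaussian integration by parts in Euclidean space\<close>

lemma lborel_nn_integral_translate:
  fixes g :: "'a::euclidean_space \<Rightarrow> ennreal"
  assumes [measurable]: "g \<in> borel_measurable borel"
  shows "(\<integral>\<^sup>+y. g (c + y) \<partial>lborel) = integral\<^sup>N lborel g"
  using nn_integral_distr[of "(+) c" lborel borel g] by (simp add: lborel_distr_plus)

lemma lborel_integral_translate:
  fixes g :: "'a::euclidean_space \<Rightarrow> real"
  assumes [measurable]: "g \<in> borel_measurable borel"
  shows "(\<integral>y. g (c + y) \<partial>lborel) = integral\<^sup>L lborel g"
  using integral_distr[of "(+) c" lborel borel g] by (simp add: lborel_distr_plus)

lemma has_bochner_integral_std_normal_density_shift:
  "has_bochner_integral lborel (\<lambda>s. std_normal_density (c - s)) 1"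
proof -
  have "std_normal_density (c - s) = normal_density c 1 s" for s
    by (simp add: normal_density_def power2_commute)
  then show ?thesis
    by (simp add: has_bochner_integral_iff)
qed

lemma integrable_std_normal_density_shift_mult:
  fixes f :: "'a::euclidean_space \<Rightarrow> real" and c :: "'a \<Rightarrow> real"
  assumes f_int: "integrable lborel f" and [measurable]: "c \<in> borel_measurable borel"
  shows "integrable (lborel \<Otimes>\<^sub>M lborel) (\<lambda>(z, s). std_normal_density (c z - s) * f z)"
proof (rule lborel_pair.Fubini_integrable)
  have [measurable]: "f \<in> borel_measurable borel"
    using borel_measurable_integrable[OF f_int] by simp
  show "(\<lambda>(z, s). std_normal_density (c z - s) * f z) \<in> borel_measurable (lborel \<Otimes>\<^sub>M lborel)"
    by measurable
  have "(\<integral>s. norm (std_normal_density (c z - s) * f z) \<partial>lborel) = norm (f z)" for z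
    using has_bochner_integral_mult_left[OF has_bochner_integral_std_normal_density_shift[of "c z"], of "norm (f z)"]
    by (simp add: abs_mult abs_of_nonneg[OF normal_density_nonneg] has_bochner_integral_iff)
  then show "integrable lborel (\<lambda>z. \<integral>s. norm (case_prod (\<lambda>z s. std_normal_density (c z - s) * f z) (z, s)) \<partial>lborel)"
    using f_int by simp
  show "AE z in lborel. integrable lborel (\<lambda>s. case_prod (\<lambda>z s. std_normal_density (c z - s) * f z) (z, s))"
    using has_bochner_integral_std_normal_density_shift by (simp add: has_bochner_integral_iff)
qed

text \<open>Both sides are the integral of \<open>\<Psi> z s = \<phi> (u \<bullet> z - s) * f z\<close> over \<open>'a \<times> \<real>\<close>, with \<open>\<phi>\<close>
  the standard normal density: integrating out \<open>s\<close> first gives \<open>\<integral>f\<close>, while the shear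
  \<open>z = y + s *\<^sub>R u\<close>, which keeps \<open>u \<bullet> z - s = u \<bullet> y\<close>, gives the right-hand side.\<close>
lemma lborel_integral_along_lines:
  fixes f :: "'a::euclidean_space \<Rightarrow> real" and u :: 'a
  assumes f_int: "integrable lborel f" and u: "norm u = 1"
  shows "AE y in lborel. integrable lborel (\<lambda>s. f (y + s *\<^sub>R u))"
    and "(\<integral>y. f y \<partial>lborel) = (\<integral>y. std_normal_density (u \<bullet> y) * (\<integral>s. f (y + s *\<^sub>R u) \<partial>lborel) \<partial>lborel)"
proof -
  have [measurable]: "f \<in> borel_measurable borel"
    using borel_measurable_integrable[OF f_int] by simp
  define \<Psi> where "\<Psi> = (\<lambda>z s. std_normal_density (u \<bullet> z - s) * f z)"
  define \<Phi> where "\<Phi> = (\<lambda>y s. std_normal_density (u \<bullet> y) * f (y + s *\<^sub>R u))"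
  have \<Psi>_int: "integrable (lborel \<Otimes>\<^sub>M lborel) (case_prod \<Psi>)"
    unfolding \<Psi>_def by (rule integrable_std_normal_density_shift_mult[OF f_int]) simp
  have shear: "\<Phi> y s = \<Psi> (s *\<^sub>R u + y) s" for y s
    using u by (simp add: \<Phi>_def \<Psi>_def inner_add_right norm_eq_1 algebra_simps)
  have \<Phi>_\<Psi>_nn_integral: "(\<integral>\<^sup>+y. norm (\<Phi> y s) \<partial>lborel) = (\<integral>\<^sup>+z. norm (\<Psi> z s) \<partial>lborel)" for s
    unfolding shear by (rule lborel_nn_integral_translate) (simp add: \<Psi>_def)
  have \<Phi>_int: "integrable (lborel \<Otimes>\<^sub>M lborel) (case_prod \<Phi>)"
  proof (rule integrableI_bounded)
    have "(\<integral>\<^sup>+p. norm (case_prod \<Phi> p) \<partial>(lborel \<Otimes>\<^sub>M lborel))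
        = (\<integral>\<^sup>+s. \<integral>\<^sup>+y. norm (\<Phi> y s) \<partial>lborel \<partial>lborel)"
      using lborel_pair.nn_integral_snd[of "\<lambda>p. ennreal (norm (case_prod \<Phi> p))"] by (simp add: \<Phi>_def)
    also have "\<dots> = (\<integral>\<^sup>+p. norm (case_prod \<Psi> p) \<partial>(lborel \<Otimes>\<^sub>M lborel))"
      unfolding \<Phi>_\<Psi>_nn_integral
      using lborel_pair.nn_integral_snd[of "\<lambda>p. ennreal (norm (case_prod \<Psi> p))"] by (simp add: \<Psi>_def)
    also have "\<dots> < \<infinity>"
      using \<Psi>_int by (simp add: integrable_iff_bounded)
    finally show "(\<integral>\<^sup>+p. norm (case_prod \<Phi> p) \<partial>(lborel \<Otimes>\<^sub>M lborel)) < \<infinity>" .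
  qed (simp add: \<Phi>_def)
  have "std_normal_density x \<noteq> 0" for x
    using normal_density_pos[of 1 0 x] by simp
  then show "AE y in lborel. integrable lborel (\<lambda>s. f (y + s *\<^sub>R u))"
    using lborel_pair.AE_integrable_fst[OF \<Phi>_int] by (simp add: \<Phi>_def)
  have "(\<integral>y. std_normal_density (u \<bullet> y) * (\<integral>s. f (y + s *\<^sub>R u) \<partial>lborel) \<partial>lborel)
      = (\<integral>y. \<integral>s. \<Phi> y s \<partial>lborel \<partial>lborel)"
    by (simp add: \<Phi>_def)
  also have "\<dots> = (\<integral>s. \<integral>y. \<Phi> y s \<partial>lborel \<partial>lborel)"
    by (rule lborel_pair.Fubini_integral[OF \<Phi>_int, symmetric])
  also have "\<dots> = (\<integral>s. \<integral>z. \<Psi> z s \<partial>lborel \<partial>lborel)"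
    unfolding shear by (subst lborel_integral_translate) (simp_all add: \<Psi>_def)
  also have "\<dots> = (\<integral>z. \<integral>s. \<Psi> z s \<partial>lborel \<partial>lborel)"
    by (rule lborel_pair.Fubini_integral[OF \<Psi>_int])
  also have "\<dots> = (\<integral>z. f z \<partial>lborel)"
    using has_bochner_integral_integral_eq[OF has_bochner_integral_std_normal_density_shift]
    by (simp add: \<Psi>_def)
  finally show "(\<integral>y. f y \<partial>lborel) = (\<integral>y. std_normal_density (u \<bullet> y) * (\<integral>s. f (y + s *\<^sub>R u) \<partial>lborel) \<partial>lborel)"
    by simp
qed

definition gaussian_density :: "'a::euclidean_space \<Rightarrow> real" where
  "gaussian_density x = exp (- (norm x)\<^sup>2 / 2) / sqrt (2 * pi) ^ DIM('a)"

lemma gaussian_density_pos: "0 < gaussian_density x"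
  by (simp add: gaussian_density_def)

lemma borel_measurable_gaussian_density [measurable]: "gaussian_density \<in> borel_measurable borel"
  unfolding gaussian_density_def by measurable

lemma gaussian_density_along_line:
  assumes "norm u = 1"
  shows "gaussian_density (y + s *\<^sub>R u)
    = gaussian_density y * exp ((u \<bullet> y)\<^sup>2 / 2) * sqrt (2 * pi) * normal_density (- (u \<bullet> y)) 1 s"
proof -
  have "u \<bullet> u = 1"
    using assms by (simp add: norm_eq_1)
  then have "(norm (y + s *\<^sub>R u))\<^sup>2 = (norm y)\<^sup>2 - (u \<bullet> y)\<^sup>2 + (s - - (u \<bullet> y))\<^sup>2"
    unfolding power2_norm_eq_inner
    by (simp add: inner_add_left inner_add_right inner_commute power2_eq_square algebra_simps)
  then have "exp (- (norm (y + s *\<^sub>R u))\<^sup>2 / 2)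
      = exp (- (norm y)\<^sup>2 / 2) * exp ((u \<bullet> y)\<^sup>2 / 2) * exp (- (s - - (u \<bullet> y))\<^sup>2 / 2)"
    by (simp add: exp_add[symmetric] field_simps)
  then show ?thesis
    by (simp add: gaussian_density_def normal_density_def)
qed

lemma gaussian_integration_by_parts:
  fixes g g' :: "'a::euclidean_space \<Rightarrow> real" and u :: 'a
  assumes u: "norm u = 1"
    and deriv: "\<And>y s. ((\<lambda>s. g (y + s *\<^sub>R u)) has_real_derivative g' (y + s *\<^sub>R u)) (at s)"
    and [measurable]: "g \<in> borel_measurable borel" "g' \<in> borel_measurable borel"
    and int_g': "integrable lborel (\<lambda>x. gaussian_density x * g' x)"
    and int_g: "integrable lborel (\<lambda>x. gaussian_density x * ((u \<bullet> x) * g x))"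
  shows "(\<integral>x. gaussian_density x * ((u \<bullet> x) * g x) \<partial>lborel) = (\<integral>x. gaussian_density x * g' x \<partial>lborel)"
proof -
  define C where "C y = gaussian_density y * exp ((u \<bullet> y)\<^sup>2 / 2) * sqrt (2 * pi)" for y
  have C_nonzero: "C y \<noteq> 0" for y
    using gaussian_density_pos[of y] by (simp add: C_def)
  have line_integrals: "(\<integral>s. gaussian_density (y + s *\<^sub>R u) * ((u \<bullet> (y + s *\<^sub>R u)) * g (y + s *\<^sub>R u)) \<partial>lborel)
      = (\<integral>s. gaussian_density (y + s *\<^sub>R u) * g' (y + s *\<^sub>R u) \<partial>lborel)"
    if int_line: "integrable lborel (\<lambda>s. gaussian_density (y + s *\<^sub>R u) * g' (y + s *\<^sub>R u))" for y
  proof -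
    define \<mu> where "\<mu> = - (u \<bullet> y)"
    have density_line: "gaussian_density (y + s *\<^sub>R u) = C y * normal_density \<mu> 1 s" for s
      using gaussian_density_along_line[OF u] by (simp add: C_def \<mu>_def)
    have inner_line: "u \<bullet> (y + s *\<^sub>R u) = s - \<mu>" for s
      using u by (simp add: \<mu>_def inner_add_right norm_eq_sqrt_inner)
    have "integrable lborel (\<lambda>s. normal_density \<mu> 1 s * g' (y + s *\<^sub>R u))"
      using int_line C_nonzero[of y] by (simp add: density_line mult.assoc)
    then have "(\<integral>s. (s - \<mu>) * normal_density \<mu> 1 s * g (y + s *\<^sub>R u) \<partial>lborel)
        = (\<integral>s. normal_density \<mu> 1 s * g' (y + s *\<^sub>R u) \<partial>lborel)"
      by (intro normal_stein_identity deriv) measurable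
    then show ?thesis
      by (simp add: density_line inner_line mult_ac)
  qed
  have "(\<integral>x. gaussian_density x * ((u \<bullet> x) * g x) \<partial>lborel)
      = (\<integral>y. std_normal_density (u \<bullet> y) *
          (\<integral>s. gaussian_density (y + s *\<^sub>R u) * ((u \<bullet> (y + s *\<^sub>R u)) * g (y + s *\<^sub>R u)) \<partial>lborel) \<partial>lborel)"
    by (rule lborel_integral_along_lines(2)[OF int_g u])
  also have "\<dots> = (\<integral>y. std_normal_density (u \<bullet> y) *
          (\<integral>s. gaussian_density (y + s *\<^sub>R u) * g' (y + s *\<^sub>R u) \<partial>lborel) \<partial>lborel)"
    using lborel_integral_along_lines(1)[OF int_g' u]
    by (intro integral_cong_AE) (auto elim!: AE_mp simp: line_integrals)
  also have "\<dots> = (\<integral>x. gaussian_density x * g' x \<partial>lborel)"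
    by (rule lborel_integral_along_lines(2)[OF int_g' u, symmetric])
  finally show ?thesis .
qed

section \<open>The standard Gaussian on \<open>real ^ 'd\<close> and the alignment\<close>

lemma std_gauss_eq_density: "std_gauss = density lborel (\<lambda>x::real ^ 'd::finite. ennreal (gaussian_density x))"
proof -
  have "(\<Prod>j\<in>UNIV. std_normal_density (x $ j)) = gaussian_density x" for x :: "real ^ 'd"
  proof -
    have "(\<Prod>j\<in>UNIV. std_normal_density (x $ j)) = (\<Prod>j\<in>UNIV. exp (- (x $ j)\<^sup>2 / 2)) / sqrt (2 * pi) ^ CARD('d)"
      by (simp add: normal_density_def prod_dividef)
    also have "(\<Prod>j\<in>UNIV. exp (- (x $ j)\<^sup>2 / 2)) = exp (- (norm x)\<^sup>2 / 2)"
      unfolding power2_norm_eq_inner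
      by (simp add: exp_sum[symmetric] inner_vec_def power2_eq_square sum_negf sum_divide_distrib)
    finally show ?thesis
      by (simp add: gaussian_density_def)
  qed
  then show ?thesis
    unfolding std_gauss_def by (simp add: prod_ennreal)
qed

lemma sigma_finite_std_gauss: "sigma_finite_measure (std_gauss :: (real ^ 'd::finite) measure)"
  unfolding std_gauss_eq_density
  by (subst sigma_finite_measure.sigma_finite_iff_density_finite[OF sigma_finite_lborel]) auto

lemma
  fixes f :: "real ^ 'd::finite \<Rightarrow> 'b::{banach, second_countable_topology}"
  assumes "f \<in> borel_measurable borel"
  shows integrable_std_gauss_iff: "integrable std_gauss f \<longleftrightarrow> integrable lborel (\<lambda>x. gaussian_density x *\<^sub>R f x)"
    and integral_std_gauss: "(\<integral>x. f x \<partial>std_gauss) = (\<integral>x. gaussian_density x *\<^sub>R f x \<partial>lborel)"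
proof -
  have nonneg: "AE x in lborel. 0 \<le> gaussian_density x"
    by (simp add: less_imp_le[OF gaussian_density_pos])
  show "integrable std_gauss f \<longleftrightarrow> integrable lborel (\<lambda>x. gaussian_density x *\<^sub>R f x)"
    using assms nonneg unfolding std_gauss_eq_density by (intro integrable_density) simp_all
  show "(\<integral>x. f x \<partial>std_gauss) = (\<integral>x. gaussian_density x *\<^sub>R f x \<partial>lborel)"
    using assms nonneg unfolding std_gauss_eq_density by (intro integral_density) simp_all
qed

lemma has_real_derivative_along_line:
  fixes g :: "'a::real_normed_vector \<Rightarrow> real"
  assumes "(g has_derivative g') (at (y + s *\<^sub>R u))"
  shows "((\<lambda>s. g (y + s *\<^sub>R u)) has_real_derivative g' u) (at s)"
proof -
  have "((\<lambda>s. y + s *\<^sub>R u) has_derivative (\<lambda>h. h *\<^sub>R u)) (at s)"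
    by (auto intro!: derivative_eq_intros)
  from diff_chain_at[OF this assms]
  have "((\<lambda>s. g (y + s *\<^sub>R u)) has_derivative (\<lambda>h. g' (h *\<^sub>R u))) (at s)"
    by (simp add: o_def)
  moreover have "g' (h *\<^sub>R u) = h * g' u" for h
    using linear_scale[OF bounded_linear.linear[OF has_derivative_bounded_linear[OF assms]]] by simp
  ultimately have "((\<lambda>s. g (y + s *\<^sub>R u)) has_derivative (\<lambda>h. h * g' u)) (at s)"
    by simp
  then show ?thesis
    unfolding has_field_derivative_def by (rule has_derivative_eq_rhs) (simp add: fun_eq_iff mult.commute)
qed

lemma std_gauss_stein_identity:
  fixes G :: "real ^ 'd::finite \<Rightarrow> real ^ 'n::finite" and H :: "real ^ 'd \<Rightarrow> real ^ 'd ^ 'n"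
  assumes deriv: "\<And>x i. ((\<lambda>y. G y $ i) has_derivative (\<lambda>v. H x $ i \<bullet> v)) (at x)"
    and H_int: "integrable std_gauss H"
    and G_int: "integrable std_gauss (\<lambda>x. (u \<bullet> x) *\<^sub>R G x)"
    and u: "norm u = 1"
  shows "(\<integral>x. (u \<bullet> x) *\<^sub>R G x \<partial>std_gauss) = (\<integral>x. H x \<partial>std_gauss) *v u"
proof (rule vec_eq_iff[THEN iffD2], intro allI)
  fix i
  have H_measurable [measurable]: "H \<in> borel_measurable borel"
    using borel_measurable_integrable[OF H_int] by (simp add: std_gauss_eq_density)
  have "isCont (\<lambda>y. G y $ i) x" for x
    using deriv by (rule has_derivative_continuous)
  then have G_i_measurable [measurable]: "(\<lambda>y. G y $ i) \<in> borel_measurable borel"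
    by (intro borel_measurable_continuous_onI continuous_at_imp_continuous_on) simp
  have row_linear: "bounded_linear (\<lambda>M :: real ^ 'd ^ 'n. M $ i \<bullet> u)"
    by (intro bounded_linear_compose[OF bounded_linear_inner_left bounded_linear_vec_nth])
  have H_i_measurable [measurable]: "(\<lambda>x. H x $ i \<bullet> u) \<in> borel_measurable borel"
    using measurable_compose[OF H_measurable borel_measurable_continuous_onI[OF linear_continuous_on[OF row_linear]]]
    by simp
  have G_i_weighted_measurable: "(\<lambda>x. (u \<bullet> x) * G x $ i) \<in> borel_measurable borel"
    by measurable
  have G_int_i: "integrable std_gauss (\<lambda>x. (u \<bullet> x) * G x $ i)"
    using integrable_bounded_linear[OF bounded_linear_vec_nth G_int, of i] by simp
  have H_int_i: "integrable std_gauss (\<lambda>x. H x $ i \<bullet> u)"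
    using integrable_bounded_linear[OF row_linear H_int] by simp
  have line_deriv: "((\<lambda>s. G (y + s *\<^sub>R u) $ i) has_real_derivative H (y + s *\<^sub>R u) $ i \<bullet> u) (at s)" for y s
    using deriv by (rule has_real_derivative_along_line)
  have "(\<integral>x. (u \<bullet> x) *\<^sub>R G x \<partial>std_gauss) $ i = (\<integral>x. (u \<bullet> x) * G x $ i \<partial>std_gauss)"
    using integral_bounded_linear[OF bounded_linear_vec_nth G_int, of i] by simp
  also have "\<dots> = (\<integral>x. gaussian_density x * ((u \<bullet> x) * G x $ i) \<partial>lborel)"
    using integral_std_gauss[OF G_i_weighted_measurable] by simp
  also have "\<dots> = (\<integral>x. gaussian_density x * (H x $ i \<bullet> u) \<partial>lborel)"
  proof (rule gaussian_integration_by_parts[OF u line_deriv G_i_measurable H_i_measurable])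
    show "integrable lborel (\<lambda>x. gaussian_density x * (H x $ i \<bullet> u))"
      using H_int_i integrable_std_gauss_iff[OF H_i_measurable] by simp
    show "integrable lborel (\<lambda>x. gaussian_density x * ((u \<bullet> x) * G x $ i))"
      using G_int_i integrable_std_gauss_iff[OF G_i_weighted_measurable] by simp
  qed
  also have "\<dots> = (\<integral>x. H x $ i \<bullet> u \<partial>std_gauss)"
    using integral_std_gauss[OF H_i_measurable] by simp
  also have "\<dots> = ((\<integral>x. H x \<partial>std_gauss) *v u) $ i"
    using integral_bounded_linear[OF row_linear H_int]
    by (simp add: matrix_vector_mult_def inner_vec_def)
  finally show "(\<integral>x. (u \<bullet> x) *\<^sub>R G x \<partial>std_gauss) $ i = ((\<integral>x. H x \<partial>std_gauss) *v u) $ i" .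
qed

lemma
  fixes f :: "'a \<Rightarrow> real" and g :: "'b \<Rightarrow> real"
  assumes "pair_sigma_finite M N" and f_int: "integrable M f" and g_int: "integrable N g"
  shows integrable_pair_measure_mult: "integrable (M \<Otimes>\<^sub>M N) (\<lambda>p. f (fst p) * g (snd p))"
    and integral_pair_measure_mult: "(\<integral>p. f (fst p) * g (snd p) \<partial>(M \<Otimes>\<^sub>M N)) = integral\<^sup>L M f * integral\<^sup>L N g"
proof -
  interpret pair_sigma_finite M N by fact
  have [measurable]: "f \<in> borel_measurable M" "g \<in> borel_measurable N"
    using f_int g_int by simp_all
  show int: "integrable (M \<Otimes>\<^sub>M N) (\<lambda>p. f (fst p) * g (snd p))"
  proof (rule Fubini_integrable)
    show "integrable M (\<lambda>x. \<integral>y. norm (f (fst (x, y)) * g (snd (x, y))) \<partial>N)"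
      using f_int by (simp add: abs_mult)
    show "AE x in M. integrable N (\<lambda>y. f (fst (x, y)) * g (snd (x, y)))"
      using g_int by simp
  qed measurable
  have "(\<integral>p. f (fst p) * g (snd p) \<partial>(M \<Otimes>\<^sub>M N)) = (\<integral>x. \<integral>y. f x * g y \<partial>N \<partial>M)"
    using integral_fst'[OF int] by simp
  also have "\<dots> = integral\<^sup>L M f * integral\<^sup>L N g"
    by simp
  finally show "(\<integral>p. f (fst p) * g (snd p) \<partial>(M \<Otimes>\<^sub>M N)) = integral\<^sup>L M f * integral\<^sup>L N g" .
qed

lemma alignment_ntk_eq_norm_integral:
  fixes G :: "real ^ 'd::finite \<Rightarrow> real ^ 'n::finite" and g :: "real ^ 'd \<Rightarrow> real"
  assumes int: "integrable std_gauss (\<lambda>x. g x *\<^sub>R G x)"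
  shows "alignment (ntk G) g = (norm (\<integral>x. g x *\<^sub>R G x \<partial>std_gauss))\<^sup>2"
proof -
  interpret pair_sigma_finite "std_gauss :: (real ^ 'd) measure" std_gauss
    by (intro pair_sigma_finite.intro sigma_finite_std_gauss)
  define E where "E = (\<integral>x. g x *\<^sub>R G x \<partial>std_gauss)"
  define F where "F i x = g x * G x $ i" for i x
  have F_eq: "F i = (\<lambda>x. (g x *\<^sub>R G x) $ i)" for i
    by (simp add: fun_eq_iff F_def)
  have F_int: "integrable std_gauss (F i)" for i
    unfolding F_eq by (rule integrable_bounded_linear[OF bounded_linear_vec_nth int])
  have F_integral: "integral\<^sup>L std_gauss (F i) = E $ i" for i
    using integral_bounded_linear[OF bounded_linear_vec_nth int, of i] by (simp add: F_eq E_def)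
  have "g a * ntk G a b * g b = (\<Sum>i\<in>UNIV. F i a * F i b)" for a b
    by (simp add: ntk_def inner_vec_def F_def sum_distrib_left sum_distrib_right mult_ac)
  then have "alignment (ntk G) g = (\<integral>p. (\<Sum>i\<in>UNIV. F i (fst p) * F i (snd p)) \<partial>(std_gauss \<Otimes>\<^sub>M std_gauss))"
    by (simp add: alignment_def)
  also have "\<dots> = (\<Sum>i\<in>UNIV. \<integral>p. F i (fst p) * F i (snd p) \<partial>(std_gauss \<Otimes>\<^sub>M std_gauss))"
    using integrable_pair_measure_mult[OF pair_sigma_finite_axioms F_int F_int]
    by (intro Bochner_Integration.integral_sum) simp
  also have "\<dots> = (\<Sum>i\<in>UNIV. E $ i * E $ i)"
    by (simp add: integral_pair_measure_mult[OF pair_sigma_finite_axioms F_int F_int] F_integral)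
  also have "\<dots> = (norm E)\<^sup>2"
    by (simp add: power2_norm_eq_inner inner_vec_def)
  finally show ?thesis
    by (simp add: E_def)
qed

theorem theorem1:
  fixes f :: "real ^ 'n::finite \<Rightarrow> real ^ 'd::finite \<Rightarrow> real"
    and \<theta>0 :: "real ^ 'n"
    and G :: "real ^ 'd \<Rightarrow> real ^ 'n"
    and H :: "real ^ 'd \<Rightarrow> real ^ 'd ^ 'n"
    and u :: "real ^ 'd"
  assumes grad_theta: "\<And>x. ((\<lambda>\<theta>. f \<theta> x) has_derivative (\<lambda>h. G x \<bullet> h)) (at \<theta>0)"
    and mixed: "\<And>x i. ((\<lambda>y. G y $ i) has_derivative (\<lambda>v. H x $ i \<bullet> v)) (at x)"
    and H_int: "integrable std_gauss H"
    and G_int: "integrable std_gauss (\<lambda>x. (u \<bullet> x) *\<^sub>R G x)"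
    and unit: "norm u = 1"
  shows "alignment (ntk G) (\<lambda>x. u \<bullet> x) = (norm ((\<integral>x. H x \<partial>std_gauss) *v u))\<^sup>2"
proof -
  \<comment> \<open>Only the input derivative \<open>H\<close> of \<open>G\<close> matters.\<close>
  have "alignment (ntk G) (\<lambda>x. u \<bullet> x) = (norm (\<integral>x. (u \<bullet> x) *\<^sub>R G x \<partial>std_gauss))\<^sup>2"
    by (rule alignment_ntk_eq_norm_integral[OF G_int])
  also have "(\<integral>x. (u \<bullet> x) *\<^sub>R G x \<partial>std_gauss) = (\<integral>x. H x \<partial>std_gauss) *v u"
    by (rule std_gauss_stein_identity[OF mixed H_int G_int unit])
  finally show ?thesis .
qed

end
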